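(* Let $t\ge1$ be an integer and $\mathcal{I}\subseteq[K]$. Let $x,y\in\mathbb{R}^K$ with $x_i,y_i\in(0,1]$ for all $i\in\mathcal{I}$ and $\sum_{i\in\mathcal{I}}x_i=\sum_{i\in\mathcal{I}}y_i$, and suppose there is $c\in\mathbb{R}$ with $\nabla\phi^{t}_{\mathcal{I}}(y)=\nabla\phi^t_{\mathcal{I}}(x)-\hat\ell^t_{\mathcal{I}}+c\cdot\mathbf{1}_{\mathcal{I}}$. Then $\sum_{i\in\mathcal{I}}y_i^{4/3}\le8\sum_{i\in\mathcal{I}}x_i^{4/3}$.
   Context: $\phi^s(x)=-3K^{1/6}\sqrt{s}\sum_{i\in[K]}x_i^{2/3}$ (the $2/3$-Tsallis regularizer of Decoupled-Tsallis-INF) and $\phi^s_{\mathcal{I}}(x)=-3K^{1/6}\sqrt{s}\sum_{i\in\mathcal{I}}x_i^{2/3}$. For a vector $v$, $v_{\mathcal{I}}$ agrees with $v$ on $\mathcal{I}$ and is $0$ elsewhere; $\mathbf{1}_{\mathcal{I}}$ is the indicator vector of $\mathcal{I}$. $\hat\ell^t$ is the loss estimator of Decoupled-Tsallis-INF: $\hat\ell^t_i=\mathbb{1}\{j^t=i\}\ell^t_i/g^t_i$ for some $j^t\in[K]$, $\ell^t\in[0,1]^K$ and a probability vector $g^t$ with positive entries. *)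

theory Defs
  imports "HOL-Analysis.Analysis"
begin

text \<open>Vectors in R^K are functions nat => real indexed by [K] = {1..K}.\<close>

definition phi :: "nat \<Rightarrow> nat \<Rightarrow> (nat \<Rightarrow> real) \<Rightarrow> real" where
  "phi K s x = - 3 * real K powr (1/6) * sqrt (real s) * (\<Sum>i\<in>{1..K}. x i powr (2/3))"

definition phiI :: "nat \<Rightarrow> nat \<Rightarrow> nat set \<Rightarrow> (nat \<Rightarrow> real) \<Rightarrow> real" where
  "phiI K s I x = - 3 * real K powr (1/6) * sqrt (real s) * (\<Sum>i\<in>I. x i powr (2/3))"

definition grad :: "((nat \<Rightarrow> real) \<Rightarrow> real) \<Rightarrow> (nat \<Rightarrow> real) \<Rightarrow> nat \<Rightarrow> real" where
  "grad f x i = deriv (\<lambda>u. f (x(i := u))) (x i)"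

definition restrict_vec :: "(nat \<Rightarrow> real) \<Rightarrow> nat set \<Rightarrow> nat \<Rightarrow> real" where
  "restrict_vec v I = (\<lambda>i. if i \<in> I then v i else 0)"

definition ind_vec :: "nat set \<Rightarrow> nat \<Rightarrow> real" where
  "ind_vec I = (\<lambda>i. if i \<in> I then 1 else 0)"

definition loss_est :: "(nat \<Rightarrow> real) \<Rightarrow> (nat \<Rightarrow> real) \<Rightarrow> nat \<Rightarrow> nat \<Rightarrow> real" where
  "loss_est l g j = (\<lambda>i. (if j = i then 1 else 0) * l i / g i)"

end

theory Submission
  imports Defs
begin

text \<open>
  On \<open>I\<close> the gradient of \<open>phiI K t I\<close> is \<open>-B x\<^sub>i powr (-1/3)\<close> with \<open>B > 0\<close>, and
  \<open>u powr (-1/3)\<close> is decreasing in \<open>u\<close>, so \<open>y\<^sub>i \<le> x\<^sub>i\<close> exactly when \<open>c\<close> is at most the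
  loss estimate at \<open>i\<close>. That estimate is nonnegative and vanishes off \<open>j\<close>, so either no
  coordinate increases (\<open>c \<le> 0\<close>) or every coordinate except \<open>j\<close> does not decrease. In the
  latter case conservation of mass makes the total increase \<open>D\<close> equal to \<open>x\<^sub>j - y\<^sub>j \<le> x\<^sub>j\<close>,
  and the bound \<open>(x + d)\<^sup>p \<le> 2\<^sup>p (x\<^sup>p + d X\<^sup>p\<^sup>-\<^sup>1)\<close> for \<open>d \<le> X\<close>, applied with \<open>X = x\<^sub>j\<close> and
  summed, gives \<open>(1 + 2\<^sup>p)\<close> times the sum of the \<open>x\<^sub>i\<^sup>p\<close>; for \<open>p = 4/3\<close> this constant is below 8.
\<close>

lemma powr_add_le_shift_bound:
  fixes x d X p :: real
  assumes "0 \<le> x" "0 \<le> d" "d \<le> X" "1 \<le> p"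
  shows "(x + d) powr p \<le> 2 powr p * (x powr p + d * X powr (p - 1))"
proof -
  have "(x + d) powr p \<le> (2 * max x d) powr p"
    using assms by (intro powr_mono2) auto
  also have "\<dots> = 2 powr p * max x d powr p"
    using assms by (simp add: powr_mult)
  also have "max x d powr p \<le> x powr p + d powr p"
    by (simp add: max_def)
  also have "d powr p = d * d powr (p - 1)"
    using powr_add[of d 1 "p - 1"] assms(2) by (cases "d = 0") auto
  also have "\<dots> \<le> d * X powr (p - 1)"
    using assms by (intro mult_left_mono powr_mono2) auto
  finally show ?thesis
    by (simp add: mult_left_mono)
qed

lemma sum_powr_le_if_only_one_coordinate_decreases:
  fixes x y :: "nat \<Rightarrow> real" and p :: real
  assumes fin: "finite I" and jI: "j \<in> I" and p: "1 \<le> p"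
    and nonneg: "\<forall>i\<in>I. 0 \<le> x i \<and> 0 \<le> y i"
    and sums: "(\<Sum>i\<in>I. x i) = (\<Sum>i\<in>I. y i)"
    and up: "\<forall>i\<in>I - {j}. x i \<le> y i"
  shows "(\<Sum>i\<in>I. y i powr p) \<le> (1 + 2 powr p) * (\<Sum>i\<in>I. x i powr p)"
proof -
  let ?J = "I - {j}"
  define D where "D = (\<Sum>i\<in>?J. y i - x i)"
  have D: "D = x j - y j"
    using sums fin jI unfolding D_def by (simp add: sum_subtractf sum.remove)
  have D_nonneg: "0 \<le> D"
    unfolding D_def using up by (intro sum_nonneg) auto
  have D_le: "D \<le> x j"
    using D nonneg jI by auto
  have y_j: "y j powr p \<le> x j powr p"
    using D D_nonneg nonneg jI p by (intro powr_mono2) auto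
  have "(\<Sum>i\<in>?J. y i powr p) \<le> (\<Sum>i\<in>?J. 2 powr p * (x i powr p + (y i - x i) * x j powr (p - 1)))"
  proof (intro sum_mono)
    fix i assume i: "i \<in> ?J"
    have "y i - x i \<le> D"
      unfolding D_def using fin i up by (intro member_le_sum) auto
    then show "y i powr p \<le> 2 powr p * (x i powr p + (y i - x i) * x j powr (p - 1))"
      using powr_add_le_shift_bound[of "x i" "y i - x i" "x j" p] i nonneg up D_le p by auto
  qed
  also have "\<dots> = 2 powr p * ((\<Sum>i\<in>?J. x i powr p) + D * x j powr (p - 1))"
    unfolding D_def by (simp add: sum.distrib sum_distrib_left sum_distrib_right distrib_left)
  also have "D * x j powr (p - 1) \<le> x j * x j powr (p - 1)"
    using D_le by (intro mult_right_mono) auto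
  also have "x j * x j powr (p - 1) = x j powr p"
    using powr_add[of "x j" 1 "p - 1"] nonneg jI by (cases "x j = 0") auto
  also have "(\<Sum>i\<in>?J. x i powr p) + x j powr p = (\<Sum>i\<in>I. x i powr p)"
    using fin jI by (simp add: sum.remove)
  finally have "(\<Sum>i\<in>?J. y i powr p) \<le> 2 powr p * (\<Sum>i\<in>I. x i powr p)"
    by (simp add: mult_left_mono)
  moreover have "x j powr p \<le> (\<Sum>i\<in>I. x i powr p)"
    using fin jI by (intro member_le_sum) auto
  ultimately show ?thesis
    using y_j fin jI by (simp add: sum.remove algebra_simps)
qed

lemma grad_phiI:
  fixes x :: "nat \<Rightarrow> real"
  assumes fin: "finite I" and iI: "i \<in> I" and pos: "0 < x i"
  shows "grad (phiI K t I) x i = - 2 * real K powr (1/6) * sqrt (real t) * x i powr (-1/3)"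
proof -
  define A where "A = - 3 * real K powr (1/6) * sqrt (real t)"
  define R where "R = (\<Sum>k\<in>I - {i}. x k powr (2/3))"
  have phiI_along_i: "(\<lambda>u. phiI K t I (x(i := u))) = (\<lambda>u. A * (u powr (2/3) + R))"
  proof
    fix u
    have "(\<Sum>k\<in>I - {i}. (x(i := u)) k powr (2/3)) = R"
      unfolding R_def by (intro sum.cong) auto
    then show "phiI K t I (x(i := u)) = A * (u powr (2/3) + R)"
      using fin iI unfolding phiI_def A_def by (simp add: sum.remove)
  qed
  have "((\<lambda>u. A * (u powr (2/3) + R)) has_real_derivative A * ((2/3) * x i powr (2/3 - 1) + 0))
          (at (x i))"
    by (intro DERIV_cmult DERIV_add has_real_derivative_powr pos DERIV_const)
  then show ?thesis
    unfolding grad_def phiI_along_i A_def by (simp add: DERIV_imp_deriv)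
qed

lemma phiI_mirror_step_decreases_iff:
  fixes x y :: "nat \<Rightarrow> real"
  assumes "finite I" "i \<in> I" "0 < x i" "0 < y i" "0 < K" "0 < t"
    and step: "grad (phiI K t I) y i = grad (phiI K t I) x i - a + c"
  shows "y i \<le> x i \<longleftrightarrow> c \<le> a"
proof -
  define B where "B = 2 * real K powr (1/6) * sqrt (real t)"
  have "B > 0"
    unfolding B_def using assms(5,6) by simp
  have "B * (y i powr (-1/3) - x i powr (-1/3)) = a - c"
    using step grad_phiI[of I i x K t] grad_phiI[of I i y K t] assms(1-4)
    unfolding B_def by (simp add: algebra_simps)
  then have "c \<le> a \<longleftrightarrow> 0 \<le> B * (y i powr (-1/3) - x i powr (-1/3))"
    by simp
  also have "\<dots> \<longleftrightarrow> x i powr (-1/3) \<le> y i powr (-1/3)"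
    using \<open>B > 0\<close> by (simp add: zero_le_mult_iff)
  also have "\<dots> \<longleftrightarrow> y i \<le> x i"
    using powr_less_mono2_neg[of "-1/3" "x i" "y i"] powr_mono2'[of "-1/3" "y i" "x i"] assms(3,4)
    by (cases "y i \<le> x i") auto
  finally show ?thesis ..
qed

theorem corollary1:
  fixes K t j :: nat and I :: "nat set" and x y l g :: "nat \<Rightarrow> real" and c :: real
  assumes "t \<ge> 1"
    and "I \<subseteq> {1..K}"
    and "\<forall>i\<in>I. 0 < x i \<and> x i \<le> 1"
    and "\<forall>i\<in>I. 0 < y i \<and> y i \<le> 1"
    and "(\<Sum>i\<in>I. x i) = (\<Sum>i\<in>I. y i)"
    and "j \<in> {1..K}"
    and "\<forall>i\<in>{1..K}. 0 \<le> l i \<and> l i \<le> 1"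
    and "\<forall>i\<in>{1..K}. 0 < g i"
    and "(\<Sum>i\<in>{1..K}. g i) = 1"
    and "\<forall>i\<in>{1..K}. grad (phiI K t I) y i
           = grad (phiI K t I) x i - restrict_vec (loss_est l g j) I i + c * ind_vec I i"
  shows "(\<Sum>i\<in>I. y i powr (4/3)) \<le> 8 * (\<Sum>i\<in>I. x i powr (4/3))"
proof (cases "I = {}")
  case False
  then obtain k where k: "k \<in> I" "j \<in> I \<Longrightarrow> k = j" by blast
  have fin: "finite I" using assms(2) finite_subset by blast
  have "0 < K" using k assms(2) by auto
  have moves_down_iff: "y i \<le> x i \<longleftrightarrow> c \<le> loss_est l g j i" if "i \<in> I" for i
    using phiI_mirror_step_decreases_iff[OF fin that, of x y K t "loss_est l g j i" c]
      assms(1-4,10) \<open>0 < K\<close> that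
    unfolding restrict_vec_def ind_vec_def by auto
  have loss_nonneg: "0 \<le> loss_est l g j i" if "i \<in> I" for i
    using that assms(2,7,8) unfolding loss_est_def by (auto intro!: divide_nonneg_pos)
  have "(1 + 2 powr (4/3) :: real) \<le> 1 + 2 powr 2"
    by (intro add_left_mono powr_mono) auto
  then have const: "(1 + 2 powr (4/3) :: real) \<le> 8" by simp
  show ?thesis
  proof (cases "c \<le> 0")
    case True
    then have "(\<Sum>i\<in>I. y i powr (4/3)) \<le> (\<Sum>i\<in>I. x i powr (4/3))"
      using moves_down_iff loss_nonneg assms(4) by (intro sum_mono powr_mono2) force+
    then show ?thesis by (smt (verit) sum_nonneg powr_ge_zero)
  next
    case False
    have "x i \<le> y i" if "i \<in> I - {k}" for i
    proof -
      have "loss_est l g j i = 0"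
        using that k unfolding loss_est_def by auto
      then show ?thesis
        using moves_down_iff[of i] False that by auto
    qed
    then have "(\<Sum>i\<in>I. y i powr (4/3)) \<le> (1 + 2 powr (4/3)) * (\<Sum>i\<in>I. x i powr (4/3))"
      using assms(3-5) by (intro sum_powr_le_if_only_one_coordinate_decreases[OF fin k(1)]) auto
    also have "\<dots> \<le> 8 * (\<Sum>i\<in>I. x i powr (4/3))"
      using const by (intro mult_right_mono sum_nonneg) auto
    finally show ?thesis .
  qed
qed simp

end
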